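(* For any ${\bm{p}}\in\Delta_K^+=\{{\bm{p}}\in\mathbb{R}^K:{\bm{p}}>0,\ \sum_kp_k=1\}$, if $L^{\mathrm{same}}({\bm{p}})=L^*_N({\bm{p}})$, then $$\sum_{k=1}^Kp_k\frac{\partial f_k({\bm{p}})}{\partial p_i}=0\quad\text{for all }i\in[K].$$
   Context: Setting: distributions $\mathcal{D}_1,\dots,\mathcal{D}_K$ on $\mathcal{Z}$, a loss $\ell(h,{\bm{z}})$ (all expectations finite), $N\ge1$, a learning algorithm $\mathcal{A}:\mathcal{Z}^N\to\mathcal{H}$. For ${\bm{r}}\in\Delta_K=\{{\bm{r}}\ge0:\sum_kr_k=1\}$, $\bar e_k({\bm{r}})=\mathbb{E}_{S\sim(\sum_jr_j\mathcal{D}_j)^N}\mathbb{E}_{{\bm{z}}\sim\mathcal{D}_k}[\ell(\mathcal{A}(S),{\bm{z}})]$; $f_k({\bm{r}})=\bar e_k({\bm{r}}/|{\bm{r}}|)$ on $\mathbb{R}^K_{\ge0}\setminus\{\mathbf{0}\}$; $L_N({\bm{p}},{\bm{r}})=\sum_kp_kf_k({\bm{r}})$, $L^{\mathrm{same}}({\bm{p}})=L_N({\bm{p}},{\bm{p}})$, $L^*_N({\bm{p}})=\min_{{\bm{r}}\in\Delta_K}L_N({\bm{p}},{\bm{r}})$. *)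

theory Defs
  imports "HOL-Probability.Probability"
begin

text \<open>Index set [K] is modelled by a finite type 'k (K = CARD('k)); vectors in R^K are
functions 'k => real. The data space Z carries the measurable space M0; the distributions
D_1..D_K are probability measures on it. A training set S in Z^N is an element of
PiM {..<N} (%_. .), i.e. a function nat => 'z.\<close>

definition prob_simplex :: "('k::finite \<Rightarrow> real) set" where
  "prob_simplex = {r. (\<forall>k. 0 \<le> r k) \<and> (\<Sum>k\<in>UNIV. r k) = 1}"

definition pos_simplex :: "('k::finite \<Rightarrow> real) set" where
  "pos_simplex = {p. (\<forall>k. 0 < p k) \<and> (\<Sum>k\<in>UNIV. p k) = 1}"

definition mixture :: "'z measure \<Rightarrow> ('k::finite \<Rightarrow> 'z measure) \<Rightarrow> ('k \<Rightarrow> real) \<Rightarrow> 'z measure" where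
  "mixture M0 D r = measure_of (space M0) (sets M0)
      (\<lambda>A. \<Sum>j\<in>UNIV. ennreal (r j) * emeasure (D j) A)"

definition ebar :: "'z measure \<Rightarrow> ('k::finite \<Rightarrow> 'z measure) \<Rightarrow> ('h \<Rightarrow> 'z \<Rightarrow> real)
    \<Rightarrow> ((nat \<Rightarrow> 'z) \<Rightarrow> 'h) \<Rightarrow> nat \<Rightarrow> 'k \<Rightarrow> ('k \<Rightarrow> real) \<Rightarrow> real" where
  "ebar M0 D loss Alg N k r =
     (\<integral>S. (\<integral>z. loss (Alg S) z \<partial>(D k)) \<partial>(PiM {..<N} (\<lambda>_. mixture M0 D r)))"

definition fk :: "'z measure \<Rightarrow> ('k::finite \<Rightarrow> 'z measure) \<Rightarrow> ('h \<Rightarrow> 'z \<Rightarrow> real)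
    \<Rightarrow> ((nat \<Rightarrow> 'z) \<Rightarrow> 'h) \<Rightarrow> nat \<Rightarrow> 'k \<Rightarrow> ('k \<Rightarrow> real) \<Rightarrow> real" where
  "fk M0 D loss Alg N k r = ebar M0 D loss Alg N k (\<lambda>j. r j / (\<Sum>i\<in>UNIV. r i))"

definition LN :: "'z measure \<Rightarrow> ('k::finite \<Rightarrow> 'z measure) \<Rightarrow> ('h \<Rightarrow> 'z \<Rightarrow> real)
    \<Rightarrow> ((nat \<Rightarrow> 'z) \<Rightarrow> 'h) \<Rightarrow> nat \<Rightarrow> ('k \<Rightarrow> real) \<Rightarrow> ('k \<Rightarrow> real) \<Rightarrow> real" where
  "LN M0 D loss Alg N p r = (\<Sum>k\<in>UNIV. p k * fk M0 D loss Alg N k r)"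

definition Lsame :: "'z measure \<Rightarrow> ('k::finite \<Rightarrow> 'z measure) \<Rightarrow> ('h \<Rightarrow> 'z \<Rightarrow> real)
    \<Rightarrow> ((nat \<Rightarrow> 'z) \<Rightarrow> 'h) \<Rightarrow> nat \<Rightarrow> ('k \<Rightarrow> real) \<Rightarrow> real" where
  "Lsame M0 D loss Alg N p = LN M0 D loss Alg N p p"

text \<open>L*_N(p) = min over the prob_simplex (the minimum is attained; we write it as an infimum).\<close>
definition Lstar :: "'z measure \<Rightarrow> ('k::finite \<Rightarrow> 'z measure) \<Rightarrow> ('h \<Rightarrow> 'z \<Rightarrow> real)
    \<Rightarrow> ((nat \<Rightarrow> 'z) \<Rightarrow> 'h) \<Rightarrow> nat \<Rightarrow> ('k \<Rightarrow> real) \<Rightarrow> real" where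
  "Lstar M0 D loss Alg N p = (INF r\<in>prob_simplex. LN M0 D loss Alg N p r)"

end

theory Submission
  imports Defs
begin

text \<open>Every \<open>D\<^sub>j\<close> has a density \<open>h\<^sub>j\<close> bounded by \<open>K\<close> with respect to the uniform mixture \<open>\<mu>\<close>.
  Hence the mixture with weights \<open>r\<close> has density \<open>\<Sum>\<^sub>j r\<^sub>j h\<^sub>j\<close>, its \<open>N\<close>-fold power has density
  \<open>\<Prod>\<^sub>n \<Sum>\<^sub>j r\<^sub>j h\<^sub>j(z\<^sub>n)\<close> with respect to \<open>\<mu>\<^sup>N\<close>, and expanding the product shows that on the simplex
  each \<open>ebar\<^sub>k\<close> is a homogeneous polynomial of degree \<open>N\<close> in \<open>r\<close>. As \<open>f\<^sub>k(r) = ebar\<^sub>k(r/|r|)\<close>,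
  the map \<open>t \<mapsto> f\<^sub>k(p(i:=t))\<close> is differentiable at \<open>p\<^sub>i > 0\<close>. By scale invariance every
  \<open>L\<^sub>N(p, p(i:=t))\<close> with \<open>t > 0\<close> is a value of \<open>L\<^sub>N(p, \<cdot>)\<close> on the simplex, so if \<open>L\<^sub>N(p, p)\<close> is the
  minimum then \<open>t = p\<^sub>i\<close> is a local minimum of \<open>t \<mapsto> \<Sum>\<^sub>k p\<^sub>k f\<^sub>k(p(i:=t))\<close>, and Fermat's rule
  gives the claim.\<close>

lemma sets_mixture [simp]: "sets (mixture M0 D r) = sets M0"
  unfolding mixture_def by (simp add: sets_measure_of_conv sets.space_closed sets.sigma_sets_eq)

lemma space_mixture [simp]: "space (mixture M0 D r) = space M0"
  using sets_eq_imp_space_eq[OF sets_mixture] .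

lemma emeasure_mixture:
  fixes D :: "'k::finite \<Rightarrow> 'z measure"
  assumes sD: "\<And>j. sets (D j) = sets M0" and A: "A \<in> sets M0"
  shows "emeasure (mixture M0 D r) A = (\<Sum>j\<in>UNIV. ennreal (r j) * emeasure (D j) A)"
  unfolding mixture_def
proof (rule emeasure_measure_of_sigma[OF sets.sigma_algebra_axioms _ _ A])
  show "positive (sets M0) (\<lambda>A. \<Sum>j\<in>UNIV. ennreal (r j) * emeasure (D j) A)"
    by (simp add: positive_def)
  show "countably_additive (sets M0) (\<lambda>A. \<Sum>j\<in>UNIV. ennreal (r j) * emeasure (D j) A)"
  proof (rule countably_additiveI)
    fix F :: "nat \<Rightarrow> 'z set"
    assume F: "range F \<subseteq> sets M0" "disjoint_family F"
    have "(\<Sum>i. \<Sum>j\<in>UNIV. ennreal (r j) * emeasure (D j) (F i))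
        = (\<Sum>j\<in>UNIV. \<Sum>i. ennreal (r j) * emeasure (D j) (F i))"
      by (rule suminf_sum) simp
    also have "\<dots> = (\<Sum>j\<in>UNIV. ennreal (r j) * emeasure (D j) (\<Union> (range F)))"
      using F sD by (simp add: suminf_emeasure)
    finally show "(\<Sum>i. \<Sum>j\<in>UNIV. ennreal (r j) * emeasure (D j) (F i))
        = (\<Sum>j\<in>UNIV. ennreal (r j) * emeasure (D j) (\<Union> (range F)))" .
  qed
qed

lemma mixture_eq_density:
  fixes D :: "'k::finite \<Rightarrow> 'z measure"
  assumes sD: "\<And>j. sets (D j) = sets M0" and smu: "sets mu = sets M0"
    and h: "\<And>j. h j \<in> borel_measurable mu" and dens: "\<And>j. density mu (h j) = D j"
  shows "mixture M0 D r = density mu (\<lambda>z. \<Sum>j\<in>UNIV. ennreal (r j) * h j z)"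
proof (rule measure_eqI)
  show "sets (mixture M0 D r) = sets (density mu (\<lambda>z. \<Sum>j\<in>UNIV. ennreal (r j) * h j z))"
    using smu by simp
  fix A assume "A \<in> sets (mixture M0 D r)"
  then have A: "A \<in> sets mu" using smu by simp
  have "emeasure (density mu (\<lambda>z. \<Sum>j\<in>UNIV. ennreal (r j) * h j z)) A
      = (\<integral>\<^sup>+ z. (\<Sum>j\<in>UNIV. ennreal (r j) * (h j z * indicator A z)) \<partial>mu)"
    using A h by (simp add: emeasure_density sum_distrib_right mult.assoc)
  also have "\<dots> = (\<Sum>j\<in>UNIV. ennreal (r j) * \<integral>\<^sup>+ z. h j z * indicator A z \<partial>mu)"
    using h A by (simp add: nn_integral_sum nn_integral_cmult)
  also have "\<dots> = (\<Sum>j\<in>UNIV. ennreal (r j) * emeasure (D j) A)"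
    using h A by (simp add: dens[symmetric] emeasure_density)
  finally show "emeasure (mixture M0 D r) A
      = emeasure (density mu (\<lambda>z. \<Sum>j\<in>UNIV. ennreal (r j) * h j z)) A"
    using emeasure_mixture[OF sD] A smu by simp
qed

lemma prob_space_mixture:
  fixes D :: "'k::finite \<Rightarrow> 'z measure"
  assumes pD: "\<And>j. prob_space (D j)" and sD: "\<And>j. sets (D j) = sets M0"
    and r: "r \<in> prob_simplex"
  shows "prob_space (mixture M0 D r)"
proof (rule prob_spaceI)
  have "emeasure (mixture M0 D r) (space M0) = (\<Sum>j\<in>UNIV. ennreal (r j))"
    using emeasure_mixture[OF sD sets.top] prob_space.emeasure_space_1[OF pD]
      sets_eq_imp_space_eq[OF sD] by simp
  also have "\<dots> = 1"
    using r by (simp add: prob_simplex_def sum_ennreal)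
  finally show "emeasure (mixture M0 D r) (space (mixture M0 D r)) = 1"
    by simp
qed

lemma pos_simplex_subset_prob_simplex: "pos_simplex \<subseteq> prob_simplex"
  by (auto simp: pos_simplex_def prob_simplex_def less_imp_le)

lemma uniform_in_pos_simplex: "(\<lambda>_. 1 / real CARD('k::finite)) \<in> (pos_simplex :: ('k \<Rightarrow> real) set)"
  by (simp add: pos_simplex_def)

lemma absolutely_continuous_mixture:
  fixes D :: "'k::finite \<Rightarrow> 'z measure"
  assumes sD: "\<And>j. sets (D j) = sets M0" and rj: "0 < r j"
  shows "absolutely_continuous (mixture M0 D r) (D j)"
  unfolding absolutely_continuous_def
proof
  fix A assume "A \<in> null_sets (mixture M0 D r)"
  then have A: "A \<in> sets M0" "emeasure (mixture M0 D r) A = 0" by auto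
  have "ennreal (r j) * emeasure (D j) A \<le> (\<Sum>j'\<in>UNIV. ennreal (r j') * emeasure (D j') A)"
    by (rule member_le_sum) auto
  also have "\<dots> = 0"
    using emeasure_mixture[of D M0 A r, OF sD A(1)] A(2) by simp
  finally show "A \<in> null_sets (D j)"
    using A(1) sD rj by auto
qed

text \<open>The densities of the \<open>D\<^sub>j\<close> with respect to their \<open>r\<close>-mixture sum to one with weights \<open>r\<close>,
  so each is at most \<open>1 / r\<^sub>j\<close>.\<close>

lemma RN_deriv_mixture_le:
  fixes D :: "'k::finite \<Rightarrow> 'z measure"
  assumes pD: "\<And>j. prob_space (D j)" and sD: "\<And>j. sets (D j) = sets M0"
    and r: "r \<in> pos_simplex"
  defines "mu \<equiv> mixture M0 D r"
  shows "AE z in mu. RN_deriv mu (D j) z \<le> ennreal (1 / r j)"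
proof -
  have r_pos: "0 < r j'" for j' using r by (simp add: pos_simplex_def)
  have "prob_space mu"
    unfolding mu_def using r pos_simplex_subset_prob_simplex by (intro prob_space_mixture pD sD) auto
  then interpret mu: prob_space mu .
  have smu: "sets mu = sets M0" unfolding mu_def by simp
  have dens: "density mu (RN_deriv mu (D j')) = D j'" for j'
    using absolutely_continuous_mixture[of D M0 r, OF sD r_pos] sD[of j'] smu
    unfolding mu_def[symmetric] by (intro mu.density_RN_deriv) auto
  have "mixture M0 D r = density mu (\<lambda>z. \<Sum>j'\<in>UNIV. ennreal (r j') * RN_deriv mu (D j') z)"
    by (rule mixture_eq_density[where D=D and h="\<lambda>j. RN_deriv mu (D j)", OF sD smu _ dens]) simp
  then have "density mu (\<lambda>z. \<Sum>j'\<in>UNIV. ennreal (r j') * RN_deriv mu (D j') z) = density mu (\<lambda>_. 1)"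
    unfolding mu_def[symmetric] density_1 by (rule sym)
  then have "AE z in mu. (\<Sum>j'\<in>UNIV. ennreal (r j') * RN_deriv mu (D j') z) = 1"
    by (subst (asm) mu.density_unique_iff) auto
  then show ?thesis
  proof eventually_elim
    case (elim z)
    have "ennreal (r j) * RN_deriv mu (D j) z \<le> 1"
      using member_le_sum[of j UNIV "\<lambda>j'. ennreal (r j') * RN_deriv mu (D j') z"] elim by simp
    then have "ennreal (1 / r j) * (ennreal (r j) * RN_deriv mu (D j) z) \<le> ennreal (1 / r j)"
      using mult_left_mono[of _ 1 "ennreal (1 / r j)"] by simp
    moreover have "ennreal (1 / r j) * ennreal (r j) = 1"
      using r_pos[of j] by (simp flip: ennreal_mult)
    ultimately show ?case
      by (simp add: mult.assoc[symmetric])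
  qed
qed

lemma exists_bounded_densities:
  fixes D :: "'k::finite \<Rightarrow> 'z measure"
  assumes pD: "\<And>j. prob_space (D j)" and sD: "\<And>j. sets (D j) = sets M0"
    and r: "r \<in> pos_simplex"
  obtains h where "\<And>j. h j \<in> borel_measurable M0" "\<And>j z. 0 \<le> h j z \<and> h j z \<le> 1 / r j"
    "\<And>j. density (mixture M0 D r) (\<lambda>z. ennreal (h j z)) = D j"
proof
  define mu where "mu = mixture M0 D r"
  have r_pos: "0 < r j" for j using r by (simp add: pos_simplex_def)
  have "prob_space mu"
    unfolding mu_def using r pos_simplex_subset_prob_simplex by (intro prob_space_mixture pD sD) auto
  then interpret mu: prob_space mu .
  have smu: "sets mu = sets M0" unfolding mu_def by simp
  have RN_meas[measurable]: "RN_deriv mu (D j) \<in> borel_measurable M0" for j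
    using borel_measurable_RN_deriv[of mu "D j"] unfolding measurable_cong_sets[OF smu refl] .
  define h where "h j z = min (enn2real (RN_deriv mu (D j) z)) (1 / r j)" for j z
  show h_meas: "h j \<in> borel_measurable M0" for j
    unfolding h_def by measurable
  show "0 \<le> h j z \<and> h j z \<le> 1 / r j" for j z
    unfolding h_def using r_pos[of j] by simp
  show "density (mixture M0 D r) (\<lambda>z. ennreal (h j z)) = D j" for j
  proof -
    have "AE z in mu. ennreal (h j z) = RN_deriv mu (D j) z"
      using RN_deriv_mixture_le[where D=D and j=j, OF pD sD r] unfolding mu_def[symmetric]
    proof eventually_elim
      case (elim z)
      then have "RN_deriv mu (D j) z < top"
        using ennreal_less_top by (rule le_less_trans)
      moreover have "enn2real (RN_deriv mu (D j) z) \<le> 1 / r j"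
        using elim r_pos[of j] by (intro enn2real_leI) auto
      ultimately show ?case
        unfolding h_def by simp
    qed
    then have "density mu (\<lambda>z. ennreal (h j z)) = density mu (RN_deriv mu (D j))"
      using h_meas[of j] unfolding measurable_cong_sets[OF smu refl, symmetric]
      by (intro density_cong) auto
    also have "\<dots> = D j"
      using absolutely_continuous_mixture[of D M0 r, OF sD r_pos] sD[of j] smu
      unfolding mu_def[symmetric] by (intro mu.density_RN_deriv) auto
    finally show ?thesis unfolding mu_def .
  qed
qed

lemma indicator_PiE:
  assumes "finite I" "x \<in> extensional I"
  shows "indicator (Pi\<^sub>E I A) x = (\<Prod>i\<in>I. indicator (A i) (x i) :: 'a::comm_semiring_1)"
proof (cases "\<forall>i\<in>I. x i \<in> A i")
  case True
  then have "(\<Prod>i\<in>I. indicator (A i) (x i) :: 'a) = (\<Prod>i\<in>I. 1)"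
    by (intro prod.cong) auto
  then show ?thesis using True assms(2) by (simp add: PiE_def)
next
  case False
  then obtain i where "i \<in> I" "x i \<notin> A i" by blast
  moreover from this have "(\<Prod>i\<in>I. indicator (A i) (x i) :: 'a) = 0"
    using assms(1) by (intro prod_zero bexI[of _ i]) auto
  ultimately show ?thesis by (auto simp: indicator_def PiE_iff)
qed

lemma PiM_density:
  fixes H :: "'z \<Rightarrow> real"
  assumes I: "finite I" and mu: "prob_space mu"
    and H: "H \<in> borel_measurable mu" "\<And>z. 0 \<le> H z"
    and pH: "prob_space (density mu (\<lambda>z. ennreal (H z)))"
  shows "PiM I (\<lambda>_. density mu (\<lambda>z. ennreal (H z)))
       = density (PiM I (\<lambda>_. mu)) (\<lambda>S. \<Prod>n\<in>I. ennreal (H (S n)))"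
proof -
  interpret pH: prob_space "density mu (\<lambda>z. ennreal (H z))" by (rule pH)
  interpret mu: prob_space mu by (rule mu)
  interpret PH: product_sigma_finite "\<lambda>_. density mu (\<lambda>z. ennreal (H z))"
    unfolding product_sigma_finite_def by (simp add: pH.sigma_finite_measure_axioms)
  interpret Pmu: product_sigma_finite "\<lambda>_. mu"
    unfolding product_sigma_finite_def by (simp add: mu.sigma_finite_measure_axioms)
  show ?thesis
  proof (rule PH.PiM_eqI[symmetric, OF I])
    show "sets (density (PiM I (\<lambda>_. mu)) (\<lambda>S. \<Prod>n\<in>I. ennreal (H (S n))))
        = sets (PiM I (\<lambda>_. density mu (\<lambda>z. ennreal (H z))))"
      by (simp cong: sets_PiM_cong)
    fix A assume "\<And>i. i \<in> I \<Longrightarrow> A i \<in> sets (density mu (\<lambda>z. ennreal (H z)))"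
    then have A: "\<And>i. i \<in> I \<Longrightarrow> A i \<in> sets mu" by simp
    have "emeasure (density (PiM I (\<lambda>_. mu)) (\<lambda>S. \<Prod>n\<in>I. ennreal (H (S n)))) (Pi\<^sub>E I A)
        = (\<integral>\<^sup>+ S. (\<Prod>n\<in>I. ennreal (H (S n))) * indicator (Pi\<^sub>E I A) S \<partial>PiM I (\<lambda>_. mu))"
      using A H I by (intro emeasure_density sets_PiM_I_finite) auto
    also have "\<dots> = (\<integral>\<^sup>+ S. (\<Prod>n\<in>I. ennreal (H (S n)) * indicator (A n) (S n)) \<partial>PiM I (\<lambda>_. mu))"
      using I by (intro nn_integral_cong) (auto simp: indicator_PiE space_PiM PiE_iff prod.distrib)
    also have "\<dots> = (\<Prod>n\<in>I. \<integral>\<^sup>+ z. ennreal (H z) * indicator (A n) z \<partial>mu)"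
      using A H by (intro Pmu.product_nn_integral_prod I) auto
    also have "\<dots> = (\<Prod>n\<in>I. emeasure (density mu (\<lambda>z. ennreal (H z))) (A n))"
      using A H by (intro prod.cong refl) (simp add: emeasure_density)
    finally show "emeasure (density (PiM I (\<lambda>_. mu)) (\<lambda>S. \<Prod>n\<in>I. ennreal (H (S n)))) (Pi\<^sub>E I A)
        = (\<Prod>n\<in>I. emeasure (density mu (\<lambda>z. ennreal (H z))) (A n))" .
  qed
qed

lemma PiM_mixture_eq_density:
  fixes D :: "'k::finite \<Rightarrow> 'z measure" and h :: "'k \<Rightarrow> 'z \<Rightarrow> real"
  assumes pD: "\<And>j. prob_space (D j)" and sD: "\<And>j. sets (D j) = sets M0"
    and mu: "prob_space mu" and smu: "sets mu = sets M0"
    and h_meas: "\<And>j. h j \<in> borel_measurable M0" and h_nonneg: "\<And>j z. 0 \<le> h j z"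
    and h_dens: "\<And>j. density mu (\<lambda>z. ennreal (h j z)) = D j"
    and r: "r \<in> prob_simplex" and I: "finite I"
  shows "PiM I (\<lambda>_. mixture M0 D r)
       = density (PiM I (\<lambda>_. mu)) (\<lambda>S. ennreal (\<Prod>n\<in>I. \<Sum>j\<in>UNIV. r j * h j (S n)))"
proof -
  define H where "H z = (\<Sum>j\<in>UNIV. r j * h j z)" for z
  have r_nonneg: "0 \<le> r j" for j using r by (simp add: prob_simplex_def)
  have H_nonneg: "0 \<le> H z" for z unfolding H_def using r_nonneg h_nonneg by (simp add: sum_nonneg)
  have h_meas_mu[measurable]: "h j \<in> borel_measurable mu" for j
    using h_meas unfolding measurable_cong_sets[OF smu refl] .
  have H_meas: "H \<in> borel_measurable mu" unfolding H_def by measurable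
  have "mixture M0 D r = density mu (\<lambda>z. \<Sum>j\<in>UNIV. ennreal (r j) * ennreal (h j z))"
    by (rule mixture_eq_density[OF sD smu _ h_dens]) simp
  also have "(\<lambda>z. \<Sum>j\<in>UNIV. ennreal (r j) * ennreal (h j z)) = (\<lambda>z. ennreal (H z))"
  proof
    fix z
    have "(\<Sum>j\<in>UNIV. ennreal (r j) * ennreal (h j z)) = (\<Sum>j\<in>UNIV. ennreal (r j * h j z))"
      using r_nonneg h_nonneg by (simp add: ennreal_mult)
    also have "\<dots> = ennreal (H z)"
      unfolding H_def using r_nonneg h_nonneg by (simp add: sum_ennreal)
    finally show "(\<Sum>j\<in>UNIV. ennreal (r j) * ennreal (h j z)) = ennreal (H z)" .
  qed
  finally have mix: "mixture M0 D r = density mu (\<lambda>z. ennreal (H z))" .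
  have "PiM I (\<lambda>_. mixture M0 D r) = density (PiM I (\<lambda>_. mu)) (\<lambda>S. \<Prod>n\<in>I. ennreal (H (S n)))"
    unfolding mix using prob_space_mixture[where D=D, OF pD sD r] mix
    by (intro PiM_density I mu H_meas H_nonneg) simp
  then show ?thesis
    using H_nonneg by (simp add: prod_ennreal H_def)
qed

definition hom_poly :: "nat \<Rightarrow> ((nat \<Rightarrow> 'k) \<Rightarrow> real) \<Rightarrow> ('k::finite \<Rightarrow> real) \<Rightarrow> real" where
  "hom_poly N c r = (\<Sum>\<sigma>\<in>PiE {..<N} (\<lambda>_. UNIV). (\<Prod>n<N. r (\<sigma> n)) * c \<sigma>)"

lemma ebar_eq_hom_poly_of_densities:
  fixes D :: "'k::finite \<Rightarrow> 'z measure" and h :: "'k \<Rightarrow> 'z \<Rightarrow> real"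
  assumes pD: "\<And>j. prob_space (D j)" and sD: "\<And>j. sets (D j) = sets M0"
    and mu: "prob_space mu" and smu: "sets mu = sets M0"
    and h_meas: "\<And>j. h j \<in> borel_measurable M0" and h_bound: "\<And>j z. 0 \<le> h j z \<and> h j z \<le> B"
    and h_dens: "\<And>j. density mu (\<lambda>z. ennreal (h j z)) = D j"
    and int: "integrable (PiM {..<N} (\<lambda>_. mu)) (\<lambda>S. \<integral>z. loss (Alg S) z \<partial>D k)"
    and r: "r \<in> prob_simplex"
  shows "ebar M0 D loss Alg N k r = hom_poly N (\<lambda>\<sigma>. \<integral>S. (\<Prod>n<N. h (\<sigma> n) (S n))
           * (\<integral>z. loss (Alg S) z \<partial>D k) \<partial>PiM {..<N} (\<lambda>_. mu)) r"
proof -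
  define P where "P = PiM {..<N} (\<lambda>_. mu)"
  define g where "g S = (\<integral>z. loss (Alg S) z \<partial>D k)" for S
  have g_int: "integrable P g" using int unfolding P_def g_def .
  have h_meas_mu[measurable]: "h j \<in> borel_measurable mu" for j
    using h_meas unfolding measurable_cong_sets[OF smu refl] .
  have B: "0 \<le> B" using h_bound order.trans by blast
  have coeff_int: "integrable P (\<lambda>S. (\<Prod>n<N. h (\<sigma> n) (S n)) * g S)" for \<sigma> :: "nat \<Rightarrow> 'k"
  proof (rule Bochner_Integration.integrable_bound)
    show "integrable P (\<lambda>S. B ^ N * g S)" using g_int by simp
    show "(\<lambda>S. (\<Prod>n<N. h (\<sigma> n) (S n)) * g S) \<in> borel_measurable P"
      using g_int unfolding P_def by measurable
    have "0 \<le> (\<Prod>n<N. h (\<sigma> n) (S n)) \<and> (\<Prod>n<N. h (\<sigma> n) (S n)) \<le> B ^ N" for S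
      using h_bound prod_mono[of "{..<N}" "\<lambda>n. h (\<sigma> n) (S n)" "\<lambda>_. B"] by (simp add: prod_nonneg)
    then show "AE S in P. norm ((\<Prod>n<N. h (\<sigma> n) (S n)) * g S) \<le> norm (B ^ N * g S)"
      using B by (intro AE_I2) (auto simp: abs_mult intro!: mult_right_mono)
  qed
  have expand: "(\<Prod>n<N. \<Sum>j\<in>UNIV. r j * h j (S n))
      = (\<Sum>\<sigma>\<in>PiE {..<N} (\<lambda>_. UNIV). (\<Prod>n<N. r (\<sigma> n)) * (\<Prod>n<N. h (\<sigma> n) (S n)))" for S
    by (simp add: prod_sum_PiE prod.distrib)
  have "ebar M0 D loss Alg N k r
      = (\<integral>S. g S \<partial>density P (\<lambda>S. ennreal (\<Prod>n<N. \<Sum>j\<in>UNIV. r j * h j (S n))))"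
    using h_bound unfolding ebar_def g_def P_def
    by (subst PiM_mixture_eq_density[where D=D, OF pD sD mu smu h_meas _ h_dens r finite_lessThan]) auto
  also have "\<dots> = (\<integral>S. (\<Prod>n<N. \<Sum>j\<in>UNIV. r j * h j (S n)) *\<^sub>R g S \<partial>P)"
    using g_int r h_bound unfolding P_def
    by (intro integral_density) (auto simp: prob_simplex_def prod_nonneg sum_nonneg)
  also have "\<dots> = (\<integral>S. (\<Sum>\<sigma>\<in>PiE {..<N} (\<lambda>_. UNIV).
                     (\<Prod>n<N. r (\<sigma> n)) * ((\<Prod>n<N. h (\<sigma> n) (S n)) * g S)) \<partial>P)"
    unfolding expand by (simp add: sum_distrib_right mult.assoc)
  also have "\<dots> = (\<Sum>\<sigma>\<in>PiE {..<N} (\<lambda>_. UNIV).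
                     (\<Prod>n<N. r (\<sigma> n)) * (\<integral>S. (\<Prod>n<N. h (\<sigma> n) (S n)) * g S \<partial>P))"
    using coeff_int by (subst Bochner_Integration.integral_sum) auto
  finally show ?thesis unfolding P_def g_def hom_poly_def .
qed

lemma ebar_eq_hom_poly:
  fixes D :: "'k::finite \<Rightarrow> 'z measure"
  assumes pD: "\<And>j. prob_space (D j)" and sD: "\<And>j. sets (D j) = sets M0"
    and int: "\<And>k. integrable (PiM {..<N} (\<lambda>_. mixture M0 D (\<lambda>_. 1 / real CARD('k))))
                (\<lambda>S. \<integral>z. loss (Alg S) z \<partial>D k)"
  obtains c where "\<And>k r. r \<in> prob_simplex \<Longrightarrow> ebar M0 D loss Alg N k r = hom_poly N (c k) r"
proof -
  define u where "u = (\<lambda>_::'k. 1 / real CARD('k))"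
  have u: "u \<in> pos_simplex" unfolding u_def by (rule uniform_in_pos_simplex)
  obtain h where h: "\<And>j. h j \<in> borel_measurable M0" "\<And>j z. 0 \<le> h j z \<and> h j z \<le> 1 / u j"
    "\<And>j. density (mixture M0 D u) (\<lambda>z. ennreal (h j z)) = D j"
    using exists_bounded_densities[where D=D, OF pD sD u] by blast
  have mu: "prob_space (mixture M0 D u)"
    using u pos_simplex_subset_prob_simplex by (intro prob_space_mixture pD sD) auto
  have h_bound: "0 \<le> h j z \<and> h j z \<le> real CARD('k)" for j z
    using h(2)[of j z] by (simp add: u_def)
  show ?thesis
    using ebar_eq_hom_poly_of_densities[where D=D, OF pD sD mu _ h(1) h_bound h(3) int[folded u_def]]
    by (rule that) simp
qed

lemma abs_hom_poly_le:
  assumes "r \<in> prob_simplex"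
  shows "\<bar>hom_poly N c r\<bar> \<le> (\<Sum>\<sigma>\<in>PiE {..<N} (\<lambda>_. UNIV). \<bar>c \<sigma>\<bar>)"
proof -
  have r01: "0 \<le> r j \<and> r j \<le> 1" for j
    using assms member_le_sum[of j UNIV r] by (auto simp: prob_simplex_def)
  have "\<bar>(\<Prod>n<N. r (\<sigma> n)) * c \<sigma>\<bar> \<le> \<bar>c \<sigma>\<bar>" for \<sigma> :: "nat \<Rightarrow> _"
    using r01 prod_le_1[of "{..<N}" "\<lambda>n. r (\<sigma> n)"]
    by (auto simp: abs_mult prod_nonneg intro!: mult_left_le_one_le)
  then show ?thesis
    unfolding hom_poly_def by (intro order.trans[OF sum_abs] sum_mono)
qed

lemma differentiable_prod:
  fixes f :: "'a \<Rightarrow> real \<Rightarrow> real"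
  assumes "finite A" "\<And>a. a \<in> A \<Longrightarrow> f a differentiable (at x)"
  shows "(\<lambda>t. \<Prod>a\<in>A. f a t) differentiable (at x)"
  using assms by (induction A rule: finite_induct) (auto intro!: differentiable_mult)

lemma differentiable_hom_poly:
  fixes x :: "real \<Rightarrow> 'k::finite \<Rightarrow> real"
  assumes "\<And>j. (\<lambda>t. x t j) differentiable (at a)"
  shows "(\<lambda>t. hom_poly N c (x t)) differentiable (at a)"
  unfolding hom_poly_def using assms
  by (intro differentiable_sum ballI differentiable_mult differentiable_prod differentiable_const
      finite_PiE) auto

lemma normalized_in_prob_simplex:
  fixes r :: "'k::finite \<Rightarrow> real"
  assumes "\<And>j. 0 \<le> r j" "0 < (\<Sum>i\<in>UNIV. r i)"
  shows "(\<lambda>j. r j / (\<Sum>i\<in>UNIV. r i)) \<in> prob_simplex"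
  using assms by (simp add: prob_simplex_def sum_divide_distrib[symmetric])

lemma fk_normalized:
  fixes r :: "'k::finite \<Rightarrow> real"
  assumes "(\<Sum>i\<in>UNIV. r i) \<noteq> 0"
  shows "fk M0 D loss Alg N k (\<lambda>j. r j / (\<Sum>i\<in>UNIV. r i)) = fk M0 D loss Alg N k r"
  using assms unfolding fk_def by (simp add: sum_divide_distrib[symmetric])

lemma fk_prob_simplex: "r \<in> prob_simplex \<Longrightarrow> fk M0 D loss Alg N k r = ebar M0 D loss Alg N k r"
  unfolding fk_def prob_simplex_def by simp

lemma bdd_below_LN:
  fixes c :: "'k::finite \<Rightarrow> (nat \<Rightarrow> 'k) \<Rightarrow> real"
  assumes hom: "\<And>k r. r \<in> prob_simplex \<Longrightarrow> ebar M0 D loss Alg N k r = hom_poly N (c k) r"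
  shows "bdd_below (LN M0 D loss Alg N p ` prob_simplex)"
proof (rule bdd_belowI2)
  fix r :: "'k \<Rightarrow> real" assume r: "r \<in> prob_simplex"
  have "\<bar>LN M0 D loss Alg N p r\<bar> \<le> (\<Sum>k\<in>UNIV. \<bar>p k\<bar> * (\<Sum>\<sigma>\<in>PiE {..<N} (\<lambda>_. UNIV). \<bar>c k \<sigma>\<bar>))"
    unfolding LN_def using abs_hom_poly_le[OF r]
    by (intro order.trans[OF sum_abs] sum_mono)
      (simp add: abs_mult fk_prob_simplex[OF r] hom[OF r] mult_left_mono)
  then show "- (\<Sum>k\<in>UNIV. \<bar>p k\<bar> * (\<Sum>\<sigma>\<in>PiE {..<N} (\<lambda>_. UNIV). \<bar>c k \<sigma>\<bar>))
      \<le> LN M0 D loss Alg N p r"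
    by linarith
qed

lemma Lstar_le_LN:
  fixes r :: "'k::finite \<Rightarrow> real"
  assumes bdd: "bdd_below (LN M0 D loss Alg N p ` prob_simplex)"
    and r: "\<And>j. 0 \<le> r j" "0 < (\<Sum>i\<in>UNIV. r i)"
  shows "Lstar M0 D loss Alg N p \<le> LN M0 D loss Alg N p r"
proof -
  have "Lstar M0 D loss Alg N p \<le> LN M0 D loss Alg N p (\<lambda>j. r j / (\<Sum>i\<in>UNIV. r i))"
    unfolding Lstar_def using bdd normalized_in_prob_simplex[OF r] by (rule cINF_lower)
  also have "\<dots> = LN M0 D loss Alg N p r"
    unfolding LN_def using r(2) by (simp add: fk_normalized)
  finally show ?thesis .
qed

lemma sum_fun_upd_UNIV:
  fixes p :: "'k::finite \<Rightarrow> 'a::ab_group_add"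
  shows "(\<Sum>j\<in>UNIV. (p(i := t)) j) = (\<Sum>j\<in>UNIV. p j) - p i + t"
proof -
  have "(\<Sum>j\<in>UNIV. (p(i := t)) j) = (\<Sum>j\<in>UNIV. p j + (if j = i then t - p i else 0))"
    by (intro sum.cong) auto
  then show ?thesis by (simp add: sum.distrib)
qed

lemma fun_upd_nonneg_sum_pos:
  fixes p :: "'k::finite \<Rightarrow> real"
  assumes "\<And>j. 0 \<le> p j" "0 < t"
  shows "\<And>j. 0 \<le> (p(i := t)) j" "0 < (\<Sum>j\<in>UNIV. (p(i := t)) j)"
proof -
  show "0 \<le> (p(i := t)) j" for j using assms by simp
  have "p i \<le> (\<Sum>j\<in>UNIV. p j)" by (rule member_le_sum) (use assms in auto)
  then show "0 < (\<Sum>j\<in>UNIV. (p(i := t)) j)" unfolding sum_fun_upd_UNIV using assms by simp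
qed

lemma fk_fun_upd_differentiable:
  fixes p :: "'k::finite \<Rightarrow> real"
  assumes hom: "\<And>r. r \<in> prob_simplex \<Longrightarrow> ebar M0 D loss Alg N k r = hom_poly N c r"
    and p: "\<And>j. 0 \<le> p j" "0 < p i"
  shows "(\<lambda>t. fk M0 D loss Alg N k (p(i := t))) differentiable (at (p i))"
proof -
  define q where "q t = (\<lambda>j. (p(i := t)) j / (\<Sum>l\<in>UNIV. (p(i := t)) l))" for t
  have sum_pos: "0 < (\<Sum>l\<in>UNIV. p l)"
    using fun_upd_nonneg_sum_pos(2)[where p=p and i=i, OF p] by simp
  have "(\<lambda>t. q t j) differentiable (at (p i))" for j
  proof -
    have "(\<lambda>t. (p(i := t)) j) differentiable (at (p i))"
      by (cases "j = i") (simp_all add: differentiable_ident)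
    then show ?thesis
      unfolding q_def sum_fun_upd_UNIV using sum_pos
      by (intro differentiable_divide) (auto intro!: derivative_intros)
  qed
  then have "(\<lambda>t. hom_poly N c (q t)) differentiable (at (p i))"
    by (rule differentiable_hom_poly)
  then have d: "((\<lambda>t. hom_poly N c (q t)) has_real_derivative deriv (\<lambda>t. hom_poly N c (q t)) (p i))
      (at (p i))"
    by (rule DERIV_deriv_iff_real_differentiable[THEN iffD2])
  have agree: "hom_poly N c (q t) = fk M0 D loss Alg N k (p(i := t))" if "0 < t" for t
  proof -
    have "q t \<in> prob_simplex"
      unfolding q_def by (rule normalized_in_prob_simplex[OF fun_upd_nonneg_sum_pos[where p=p, OF p(1) that]])
    then have "ebar M0 D loss Alg N k (q t) = hom_poly N c (q t)" by (rule hom)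
    then show ?thesis by (simp add: fk_def q_def)
  qed
  have "((\<lambda>t. fk M0 D loss Alg N k (p(i := t))) has_real_derivative
      deriv (\<lambda>t. hom_poly N c (q t)) (p i)) (at (p i))"
    by (rule has_field_derivative_transform_within_open[OF d, of "{0<..}"]) (use p(2) agree in auto)
  then show ?thesis
    unfolding real_differentiable_def by blast
qed

lemma Lsame_le_LN_fun_upd:
  fixes p :: "'k::finite \<Rightarrow> real"
  assumes bdd: "bdd_below (LN M0 D loss Alg N p ` prob_simplex)"
    and opt: "Lsame M0 D loss Alg N p = Lstar M0 D loss Alg N p"
    and p: "\<And>j. 0 \<le> p j" and t: "0 < t"
  shows "Lsame M0 D loss Alg N p \<le> LN M0 D loss Alg N p (p(i := t))"
  unfolding opt by (rule Lstar_le_LN[OF bdd fun_upd_nonneg_sum_pos[where p=p, OF p t]])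

theorem lemmaB2:
  fixes M0 :: "'z measure" and D :: "'k::finite \<Rightarrow> 'z measure"
    and loss :: "'h \<Rightarrow> 'z \<Rightarrow> real" and Alg :: "(nat \<Rightarrow> 'z) \<Rightarrow> 'h"
    and N :: nat and p :: "'k \<Rightarrow> real"
  assumes N: "1 \<le> N"
    and distr: "\<And>j. prob_space (D j)" "\<And>j. sets (D j) = sets M0"
    and fin_inner: "\<And>k S. S \<in> space (PiM {..<N} (\<lambda>_. M0)) \<Longrightarrow> integrable (D k) (loss (Alg S))"
    and fin_outer: "\<And>k r. r \<in> prob_simplex \<Longrightarrow>
          integrable (PiM {..<N} (\<lambda>_. mixture M0 D r)) (\<lambda>S. \<integral>z. loss (Alg S) z \<partial>(D k))"
    and p: "p \<in> pos_simplex"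
    and opt: "Lsame M0 D loss Alg N p = Lstar M0 D loss Alg N p"
  shows "\<exists>d :: 'k \<Rightarrow> 'k \<Rightarrow> real.
           (\<forall>k i. ((\<lambda>t. fk M0 D loss Alg N k (p(i := t))) has_real_derivative d k i) (at (p i)))
         \<and> (\<forall>i. (\<Sum>k\<in>UNIV. p k * d k i) = 0)"
proof -
  note uniform = pos_simplex_subset_prob_simplex[THEN subsetD, OF uniform_in_pos_simplex]
  obtain c where hom: "\<And>k r. r \<in> prob_simplex \<Longrightarrow> ebar M0 D loss Alg N k r = hom_poly N (c k) r"
    using ebar_eq_hom_poly[where D=D, OF distr fin_outer[OF uniform]] by blast
  have p_pos: "\<And>j. 0 < p j" and p_nonneg: "\<And>j. 0 \<le> p j"
    using p by (auto simp: pos_simplex_def less_imp_le)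
  define d where "d k i = deriv (\<lambda>t. fk M0 D loss Alg N k (p(i := t))) (p i)" for k i
  have d: "((\<lambda>t. fk M0 D loss Alg N k (p(i := t))) has_real_derivative d k i) (at (p i))" for k i
    unfolding d_def using fk_fun_upd_differentiable[where p=p and i=i, OF hom p_nonneg p_pos[of i]]
    by (rule DERIV_deriv_iff_real_differentiable[THEN iffD2])
  have "(\<Sum>k\<in>UNIV. p k * d k i) = 0" for i
  proof (rule DERIV_local_min[OF _ p_pos[of i]])
    show "((\<lambda>t. LN M0 D loss Alg N p (p(i := t))) has_real_derivative (\<Sum>k\<in>UNIV. p k * d k i)) (at (p i))"
      unfolding LN_def by (intro DERIV_sum DERIV_cmult d)
    show "\<forall>t. \<bar>p i - t\<bar> < p i \<longrightarrow>
        LN M0 D loss Alg N p (p(i := p i)) \<le> LN M0 D loss Alg N p (p(i := t))"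
      using Lsame_le_LN_fun_upd[OF bdd_below_LN[where p=p, OF hom] opt p_nonneg]
      by (simp add: Lsame_def)
  qed
  with d show ?thesis by blast
qed

end
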